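(* Let $(R,\mathcal{T})$ and $(S,\widetilde{\mathcal{T}})$ be transverse CEERs on a compact, metrizable, zero-dimensional space $X$, and give $R\vee S$ the étale topology transferred from $R\times_XS$ via $((x,y),(y,z))\mapsto(x,z)$. Then: (i) if $(x,y)\in R$, then $\#([x]_S)=\#([y]_S)$; (ii) if $\mathcal{O}'$ is a groupoid partition of $R\vee S$ finer than the clopen partition $\{\Delta,\,R\setminus\Delta,\,S\setminus\Delta,\,(R\vee S)\setminus(R\cup S)\}$ (where $\Delta=\Delta_X$), then for every $U\in\mathcal{O}'$ there are unique elements $U_R,U_S,V_R,V_S\in\mathcal{O}'$ with $U_R,V_R\subset R$, $U_S,V_S\subset S$ and $U=U_R\cdot U_S=V_S\cdot V_R$; moreover $\mathcal{O}'\cap R=\{U\in\mathcal{O}':U\subset R\}$ and $\mathcal{O}'\cap S$ are groupoid partitions of $R$ and $S$, respectively.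
   Context: An étale equivalence relation on $X$ is a countable equivalence relation $R\subset X\times X$ with a locally compact, Hausdorff, second countable topology in which the product of composable pairs is continuous, the inverse is a homeomorphism, and $r(x,y)=x$ is a local homeomorphism; a CEER is a compact étale equivalence relation. $[x]_S$ is the $S$-class of $x$. $R\times_XS=\{((x,y),(y,z)):(x,y)\in R,(y,z)\in S\}$ with the relative product topology; $R$ and $S$ are transverse if $R\cap S=\Delta_X$ and there is a homeomorphism $h:R\times_XS\to S\times_XR$ with $r\circ h=r$, $s\circ h=s$ (where $r((x,y),(y,z))=x$, $s((x,y),(y,z))=z$); then $((x,y),(y,z))\mapsto(x,z)$ is a bijection onto the equivalence relation $R\vee S$ generated by $R$ and $S$. For subsets $U,V$ of an equivalence relation, $U\cdot V=\{(x,z):(x,y)\in U,(y,z)\in V\text{ for some }y\}$ and $U^{-1}=\{(y,x):(x,y)\in U\}$. A groupoid partition of a CEER $R$ is a finite clopen partition $\mathcal{O}'$ of $R$ such that: $\mathcal{O}'$ is finer than $\{\Delta,R\setminus\Delta\}$; for each $U\in\mathcal{O}'$ the maps $r,s$ restricted to $U$ are homeomorphisms onto their images, and if $U\subset R\setminus\Delta$ then $r(U)\cap s(U)=\emptyset$; for all $U,V\in\mathcal{O}'$ either $U\cdot V=\emptyset$ or $U\cdot V\in\mathcal{O}'$; and $U^{-1}\in\mathcal{O}'$ for every $U\in\mathcal{O}'$. *)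

theory Defs
  imports "HOL-Analysis.Analysis"
begin

definition diag :: "'a topology \<Rightarrow> ('a \<times> 'a) set" where
  "diag X = Id_on (topspace X)"

definition fibprod :: "('a \<times> 'a) set \<Rightarrow> ('a \<times> 'a) set \<Rightarrow> (('a \<times> 'a) \<times> ('a \<times> 'a)) set" where
  "fibprod R S = {(p, q). p \<in> R \<and> q \<in> S \<and> snd p = fst q}"

definition fibprod_top :: "('a \<times> 'a) topology \<Rightarrow> ('a \<times> 'a) topology
    \<Rightarrow> (('a \<times> 'a) \<times> ('a \<times> 'a)) topology" where
  "fibprod_top TR TS = subtopology (prod_topology TR TS) (fibprod (topspace TR) (topspace TS))"

definition compose_map :: "('a \<times> 'a) \<times> ('a \<times> 'a) \<Rightarrow> 'a \<times> 'a" where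
  "compose_map pq = (fst (fst pq), snd (snd pq))"

definition local_homeomorphism :: "'b topology \<Rightarrow> 'c topology \<Rightarrow> ('b \<Rightarrow> 'c) \<Rightarrow> bool" where
  "local_homeomorphism T X f \<longleftrightarrow>
     (\<forall>p \<in> topspace T. \<exists>U. openin T U \<and> p \<in> U \<and> openin X (f ` U) \<and>
        homeomorphic_map (subtopology T U) (subtopology X (f ` U)) f)"

definition etale_eqrel :: "'a topology \<Rightarrow> ('a \<times> 'a) set \<Rightarrow> ('a \<times> 'a) topology \<Rightarrow> bool" where
  "etale_eqrel X R T \<longleftrightarrow>
     equiv (topspace X) R \<and> (\<forall>x \<in> topspace X. countable (R `` {x})) \<and>
     topspace T = R \<and> locally_compact_space T \<and> Hausdorff_space T \<and> second_countable T \<and>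
     continuous_map (fibprod_top T T) T compose_map \<and>
     homeomorphic_map T T (\<lambda>(x, y). (y, x)) \<and>
     local_homeomorphism T X fst"

definition CEER :: "'a topology \<Rightarrow> ('a \<times> 'a) set \<Rightarrow> ('a \<times> 'a) topology \<Rightarrow> bool" where
  "CEER X R T \<longleftrightarrow> etale_eqrel X R T \<and> compact_space T"

definition transverse :: "'a topology \<Rightarrow> ('a \<times> 'a) set \<Rightarrow> ('a \<times> 'a) topology
    \<Rightarrow> ('a \<times> 'a) set \<Rightarrow> ('a \<times> 'a) topology \<Rightarrow> bool" where
  "transverse X R TR S TS \<longleftrightarrow> R \<inter> S = diag X \<and>
     (\<exists>h. homeomorphic_map (fibprod_top TR TS) (fibprod_top TS TR) h \<and>
          (\<forall>pq \<in> fibprod R S. fst (fst (h pq)) = fst (fst pq) \<and> snd (snd (h pq)) = snd (snd pq)))"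

definition join_rel :: "'a topology \<Rightarrow> ('a \<times> 'a) set \<Rightarrow> ('a \<times> 'a) set \<Rightarrow> ('a \<times> 'a) set" where
  "join_rel X R S = \<Inter>{E. equiv (topspace X) E \<and> R \<union> S \<subseteq> E}"

definition join_top :: "'a topology \<Rightarrow> ('a \<times> 'a) set \<Rightarrow> ('a \<times> 'a) topology
    \<Rightarrow> ('a \<times> 'a) set \<Rightarrow> ('a \<times> 'a) topology \<Rightarrow> ('a \<times> 'a) topology" where
  "join_top X R TR S TS = topology (\<lambda>U. U \<subseteq> join_rel X R S \<and>
      openin (fibprod_top TR TS) {pq \<in> topspace (fibprod_top TR TS). compose_map pq \<in> U})"

definition groupoid_partition :: "'a topology \<Rightarrow> ('a \<times> 'a) set \<Rightarrow> ('a \<times> 'a) topology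
    \<Rightarrow> ('a \<times> 'a) set set \<Rightarrow> bool" where
  "groupoid_partition X R T P \<longleftrightarrow>
     finite P \<and> \<Union>P = R \<and> {} \<notin> P \<and>
     (\<forall>U \<in> P. \<forall>V \<in> P. U \<noteq> V \<longrightarrow> U \<inter> V = {}) \<and>
     (\<forall>U \<in> P. openin T U \<and> closedin T U) \<and>
     (\<forall>U \<in> P. U \<subseteq> diag X \<or> U \<subseteq> R - diag X) \<and>
     (\<forall>U \<in> P. homeomorphic_map (subtopology T U) (subtopology X (fst ` U)) fst \<and>
               homeomorphic_map (subtopology T U) (subtopology X (snd ` U)) snd) \<and>
     (\<forall>U \<in> P. U \<subseteq> R - diag X \<longrightarrow> fst ` U \<inter> snd ` U = {}) \<and>
     (\<forall>U \<in> P. \<forall>V \<in> P. U O V = {} \<or> U O V \<in> P) \<and>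
     (\<forall>U \<in> P. U\<inverse> \<in> P)"

end

theory Submission
  imports Defs
begin

text \<open>The homeomorphism of transversality preserves endpoints, so it identifies the
  images of R \<times>_X S and S \<times>_X R under composition: R O S = S O R. Hence R O S is an
  equivalence relation, namely R \<or> S, and since R \<inter> S is the diagonal every (x, z) in it has a
  unique midpoint y with (x, y) \<in> R and (y, z) \<in> S. Midpoint uniqueness yields injections between
  the S-classes of R-related points (part (i), via Schroeder-Bernstein, as classes may be
  infinite) and the uniqueness of the factorizations in part (ii). For the restricted partitions,
  R \<or> S induces on R its own topology: an open V \<subseteq> R pulls back to V \<times> \<Delta>, open because the
  diagonal is open in an etale relation, and conversely the continuous section
  p \<mapsto> (p, (snd p, snd p)) pulls open sets of R \<or> S back to open sets of R.\<close>

lemma continuous_map_locally: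
  assumes "\<And>x. x \<in> topspace X \<Longrightarrow> \<exists>U. openin X U \<and> x \<in> U \<and> continuous_map (subtopology X U) Y f"
  shows "continuous_map X Y f"
  by (rule pasting_lemma[where I = "{U. openin X U \<and> continuous_map (subtopology X U) Y f}"
        and T = id and f = "\<lambda>_. f"]) (use assms in auto)

lemma etale_eqrelD:
  assumes "etale_eqrel X R T"
  shows "topspace T = R" and "R \<subseteq> topspace X \<times> topspace X"
    and "\<And>x. x \<in> topspace X \<Longrightarrow> (x, x) \<in> R" and "sym R" and "trans R"
  using assms unfolding etale_eqrel_def equiv_def refl_on_def by auto

lemma continuous_map_etale_fst:
  assumes "etale_eqrel X R T"
  shows "continuous_map T X fst"
proof (rule continuous_map_locally)
  fix p assume "p \<in> topspace T"
  with assms obtain U where "openin T U" "p \<in> U"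
      "homeomorphic_map (subtopology T U) (subtopology X (fst ` U)) fst"
    unfolding etale_eqrel_def local_homeomorphism_def by blast
  then show "\<exists>U. openin T U \<and> p \<in> U \<and> continuous_map (subtopology T U) X fst"
    by (meson continuous_map_into_fulltopology homeomorphic_imp_continuous_map)
qed

lemma continuous_map_etale_swap:
  assumes "etale_eqrel X R T"
  shows "continuous_map T T (\<lambda>p. (snd p, fst p))"
  using assms unfolding etale_eqrel_def
  by (simp add: homeomorphic_imp_continuous_map case_prod_beta')

lemma continuous_map_etale_snd:
  assumes "etale_eqrel X R T"
  shows "continuous_map T X snd"
  using continuous_map_compose[OF continuous_map_etale_swap continuous_map_etale_fst, OF assms assms]
  by (simp add: o_def)

lemma continuous_map_etale_fst_unit:
  assumes "etale_eqrel X R T"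
  shows "continuous_map T T (\<lambda>p. (fst p, fst p))"
proof -
  have "continuous_map T (fibprod_top T T) (\<lambda>p. (p, (snd p, fst p)))"
    unfolding fibprod_top_def continuous_map_in_subtopology
  proof
    show "continuous_map T (prod_topology T T) (\<lambda>p. (p, snd p, fst p))"
      using continuous_map_etale_swap[OF assms] by (intro continuous_map_pairedI) auto
    show "(\<lambda>p. (p, snd p, fst p)) \<in> topspace T \<rightarrow> fibprod (topspace T) (topspace T)"
      using etale_eqrelD[OF assms] unfolding fibprod_def sym_def by auto
  qed
  moreover have "continuous_map (fibprod_top T T) T compose_map"
    using assms unfolding etale_eqrel_def by blast
  ultimately show ?thesis
    using continuous_map_compose by (fastforce simp: o_def compose_map_def)
qed

text \<open>Near a unit (y, y), the source map is injective on a neighbourhood W, and (fst p, fst p)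
  lies in W together with p for p close to (y, y); injectivity then forces p to be a unit.\<close>
lemma openin_etale_diag:
  assumes "etale_eqrel X R T"
  shows "openin T (diag X)"
proof (rule openin_subopen[THEN iffD2], rule ballI)
  fix d assume "d \<in> diag X"
  then obtain y where y: "d = (y, y)" "y \<in> topspace X" unfolding diag_def by auto
  then have dT: "d \<in> topspace T" using etale_eqrelD[OF assms] by auto
  with assms obtain W where W: "openin T W" "d \<in> W"
      "homeomorphic_map (subtopology T W) (subtopology X (fst ` W)) fst"
    unfolding etale_eqrel_def local_homeomorphism_def by blast
  have inj: "inj_on fst W"
    using homeomorphic_imp_injective_map[OF W(3)] openin_subset[OF W(1)] by (simp add: Int_absorb1)
  define W' where "W' = W \<inter> {p \<in> topspace T. (fst p, fst p) \<in> W}"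
  have "openin T W'"
    using continuous_map_etale_fst_unit[OF assms] W(1) unfolding W'_def
    by (simp add: continuous_map openin_Int)
  moreover have "d \<in> W'" unfolding W'_def using W dT y by auto
  moreover have "W' \<subseteq> diag X"
  proof
    fix p assume "p \<in> W'"
    then have "p \<in> W" "(fst p, fst p) \<in> W" "p \<in> topspace T" unfolding W'_def by auto
    with inj etale_eqrelD(1,2)[OF assms] show "p \<in> diag X"
      unfolding inj_on_def diag_def by (metis Id_onI fst_conv mem_Sigma_iff subsetD surjective_pairing)
  qed
  ultimately show "\<exists>T'. openin T T' \<and> d \<in> T' \<and> T' \<subseteq> diag X" by blast
qed

lemma continuous_map_etale_unit:
  assumes "etale_eqrel X R T"
  shows "continuous_map X T (\<lambda>x. (x, x))"
proof (rule continuous_map_locally)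
  fix y assume "y \<in> topspace X"
  then have "(y, y) \<in> topspace T" using etale_eqrelD[OF assms] by auto
  then obtain W where W: "openin X (fst ` W)" "(y, y) \<in> W"
      "homeomorphic_map (subtopology T W) (subtopology X (fst ` W)) fst"
    using assms unfolding etale_eqrel_def local_homeomorphism_def by blast
  then obtain g where "homeomorphic_maps (subtopology T W) (subtopology X (fst ` W)) fst g"
    using homeomorphic_map_maps by blast
  then have g: "continuous_map (subtopology X (fst ` W)) T g"
      and fst_g: "\<And>x. x \<in> topspace (subtopology X (fst ` W)) \<Longrightarrow> fst (g x) = x"
    unfolding homeomorphic_maps_def using continuous_map_into_fulltopology by auto
  have "continuous_map (subtopology X (fst ` W)) T ((\<lambda>p. (fst p, fst p)) \<circ> g)"
    by (rule continuous_map_compose[OF g continuous_map_etale_fst_unit[OF assms]])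
  then have "continuous_map (subtopology X (fst ` W)) T (\<lambda>x. (x, x))"
    by (rule continuous_map_eq) (simp add: fst_g)
  moreover have "y \<in> fst ` W" using W(2) by force
  ultimately show "\<exists>U. openin X U \<and> y \<in> U \<and> continuous_map (subtopology X U) T (\<lambda>x. (x, x))"
    using W(1) by blast
qed

lemma diag_subset_Id: "diag X \<subseteq> Id"
  unfolding diag_def by auto

lemma relcomp_middle_unique:
  assumes "sym R" "trans R" "sym S" "trans S" "R \<inter> S \<subseteq> Id"
    and "(x, y) \<in> R" "(y, z) \<in> S" "(x, y') \<in> R" "(y', z) \<in> S"
  shows "y = y'"
proof -
  have "(y, y') \<in> R" "(y, y') \<in> S"
    using assms(1-4,6-9) unfolding sym_def trans_def by blast+
  with assms(5) show ?thesis by blast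
qed

lemma Image_lepoll_if_relcomp_subset:
  assumes R: "sym R" "trans R" and S: "sym S" "trans S" and RS: "R \<inter> S \<subseteq> Id"
    and comm: "R O S \<subseteq> S O R" and xy: "(x, y) \<in> R"
  shows "S `` {y} \<lesssim> S `` {x}"
proof -
  have "\<exists>w. (x, w) \<in> S \<and> (w, z) \<in> R" if "z \<in> S `` {y}" for z
    using that xy comm by blast
  then obtain f where f: "\<And>z. z \<in> S `` {y} \<Longrightarrow> (x, f z) \<in> S \<and> (f z, z) \<in> R"
    by metis
  have "inj_on f (S `` {y})"
  proof (rule inj_onI)
    fix z z' assume "z \<in> S `` {y}" "z' \<in> S `` {y}" "f z = f z'"
    with f S(1) show "z = z'"
      by (metis Image_singleton_iff relcomp_middle_unique[OF R S RS] symD)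
  qed
  with f show ?thesis unfolding lepoll_def by blast
qed

lemma card_Image_eq_if_relcomp_commute:
  assumes R: "sym R" "trans R" and S: "sym S" "trans S" and RS: "R \<inter> S \<subseteq> Id"
    and comm: "R O S = S O R" and xy: "(x, y) \<in> R"
  shows "card (S `` {x}) = card (S `` {y})"
proof -
  have "(y, x) \<in> R" using R(1) xy by (rule symD)
  then have "S `` {x} \<approx> S `` {y}"
    using Image_lepoll_if_relcomp_subset[OF R S RS] comm xy by (simp add: lepoll_antisym)
  then show ?thesis unfolding eqpoll_def by (metis bij_betw_same_card)
qed

lemma topspace_fibprod_top:
  "topspace TR = R \<Longrightarrow> topspace TS = S \<Longrightarrow> topspace (fibprod_top TR TS) = fibprod R S"
  unfolding fibprod_top_def fibprod_def by auto

lemma compose_map_fibprod: "compose_map ` fibprod R S = R O S"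
  unfolding compose_map_def fibprod_def by force

lemma openin_join_top:
  "openin (join_top X R TR S TS) U \<longleftrightarrow> U \<subseteq> join_rel X R S \<and>
     openin (fibprod_top TR TS) {pq \<in> topspace (fibprod_top TR TS). compose_map pq \<in> U}"
proof -
  let ?F = "fibprod_top TR TS"
  have inter: "{pq \<in> topspace ?F. compose_map pq \<in> A \<inter> B}
      = {pq \<in> topspace ?F. compose_map pq \<in> A} \<inter> {pq \<in> topspace ?F. compose_map pq \<in> B}" for A B
    by auto
  have union: "{pq \<in> topspace ?F. compose_map pq \<in> \<Union>K}
      = (\<Union>A \<in> K. {pq \<in> topspace ?F. compose_map pq \<in> A})" for K
    by auto
  have "istopology (\<lambda>U. U \<subseteq> join_rel X R S \<and>
      openin ?F {pq \<in> topspace ?F. compose_map pq \<in> U})"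
    unfolding istopology_def inter union by (auto intro!: openin_Union)
  then show ?thesis unfolding join_top_def by simp
qed

lemma Un_subset_join_rel: "R \<union> S \<subseteq> join_rel X R S"
  unfolding join_rel_def by blast

lemma join_rel_commute: "join_rel X R S = join_rel X S R"
  unfolding join_rel_def by (simp add: Un_commute)

lemma join_rel_eq_relcomp:
  assumes eR: "etale_eqrel X R TR" and eS: "etale_eqrel X S TS" and comm: "R O S = S O R"
  shows "join_rel X R S = R O S"
proof
  note R = etale_eqrelD[OF eR] and S = etale_eqrelD[OF eS]
  have "equiv (topspace X) (R O S)"
  proof (rule equivI)
    show "R O S \<subseteq> topspace X \<times> topspace X" using R(2) S(2) by blast
    show "refl_on (topspace X) (R O S)" using R(3) S(3) by (auto intro: refl_onI)
    show "sym (R O S)"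
      using R(4) S(4) comm unfolding sym_def by blast
    show "trans (R O S)"
    proof (rule transI)
      fix x y z assume "(x, y) \<in> R O S" "(y, z) \<in> R O S"
      then obtain a b where ab: "(x, a) \<in> R" "(a, y) \<in> S" "(y, b) \<in> R" "(b, z) \<in> S" by blast
      then have "(a, b) \<in> R O S" using comm by blast
      then obtain c where "(a, c) \<in> R" "(c, b) \<in> S" by blast
      with ab R(5) S(5) show "(x, z) \<in> R O S" unfolding trans_def by blast
    qed
  qed
  moreover have "R \<union> S \<subseteq> R O S"
    using R(2,3) S(2,3) by fastforce
  ultimately show "join_rel X R S \<subseteq> R O S" unfolding join_rel_def by blast
  show "R O S \<subseteq> join_rel X R S"
    unfolding join_rel_def equiv_def trans_def by blast
qed

lemma transverse_homeomorphism:
  assumes tr: "transverse X R TR S TS" and tR: "topspace TR = R" and tS: "topspace TS = S"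
  obtains h where "homeomorphic_map (fibprod_top TR TS) (fibprod_top TS TR) h"
    and "h ` fibprod R S = fibprod S R"
    and "\<And>pq. pq \<in> fibprod R S \<Longrightarrow> compose_map (h pq) = compose_map pq"
proof -
  obtain h where h: "homeomorphic_map (fibprod_top TR TS) (fibprod_top TS TR) h"
    and hp: "\<forall>pq \<in> fibprod R S. fst (fst (h pq)) = fst (fst pq) \<and> snd (snd (h pq)) = snd (snd pq)"
    using tr unfolding transverse_def by blast
  moreover have "h ` fibprod R S = fibprod S R"
    using homeomorphic_imp_surjective_map[OF h]
    unfolding topspace_fibprod_top[OF tR tS] topspace_fibprod_top[OF tS tR] .
  moreover have "compose_map (h pq) = compose_map pq" if "pq \<in> fibprod R S" for pq
    using hp that by (simp add: compose_map_def)
  ultimately show ?thesis using that by blast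
qed

lemma transverse_relcomp_commute:
  assumes "transverse X R TR S TS" and "topspace TR = R" and "topspace TS = S"
  shows "R O S = S O R"
proof -
  obtain h where "homeomorphic_map (fibprod_top TR TS) (fibprod_top TS TR) h"
    and onto: "h ` fibprod R S = fibprod S R"
    and compose: "\<And>pq. pq \<in> fibprod R S \<Longrightarrow> compose_map (h pq) = compose_map pq"
    by (rule transverse_homeomorphism[OF assms]) blast
  have "S O R = compose_map ` h ` fibprod R S"
    by (simp add: onto compose_map_fibprod)
  also have "\<dots> = compose_map ` fibprod R S"
    unfolding image_comp by (rule image_cong) (simp_all add: compose)
  also have "\<dots> = R O S"
    by (rule compose_map_fibprod)
  finally show ?thesis by (rule sym)
qed

lemma join_top_commute:
  assumes tr: "transverse X R TR S TS" and tR: "topspace TR = R" and tS: "topspace TS = S"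
  shows "join_top X R TR S TS = join_top X S TS R TR"
proof -
  obtain h where h: "homeomorphic_map (fibprod_top TR TS) (fibprod_top TS TR) h"
    and onto: "h ` fibprod R S = fibprod S R"
    and compose: "\<And>pq. pq \<in> fibprod R S \<Longrightarrow> compose_map (h pq) = compose_map pq"
    by (rule transverse_homeomorphism[OF assms]) blast
  have pre: "h ` {pq \<in> fibprod R S. compose_map pq \<in> U} = {qp \<in> fibprod S R. compose_map qp \<in> U}"
    for U
  proof
    show "h ` {pq \<in> fibprod R S. compose_map pq \<in> U} \<subseteq> {qp \<in> fibprod S R. compose_map qp \<in> U}"
      using onto compose by auto
    show "{qp \<in> fibprod S R. compose_map qp \<in> U} \<subseteq> h ` {pq \<in> fibprod R S. compose_map pq \<in> U}"
    proof
      fix qp assume qp: "qp \<in> {qp \<in> fibprod S R. compose_map qp \<in> U}"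
      then obtain pq where "pq \<in> fibprod R S" "qp = h pq" using onto by blast
      with qp compose show "qp \<in> h ` {pq \<in> fibprod R S. compose_map pq \<in> U}" by auto
    qed
  qed
  show ?thesis
  proof (rule topology_eq[THEN iffD2], intro allI)
    fix U
    have "openin (fibprod_top TR TS) {pq \<in> fibprod R S. compose_map pq \<in> U}
        \<longleftrightarrow> openin (fibprod_top TS TR) {qp \<in> fibprod S R. compose_map qp \<in> U}"
      using homeomorphic_map_openness[OF h, of "{pq \<in> fibprod R S. compose_map pq \<in> U}"]
      by (simp add: pre topspace_fibprod_top[OF tR tS])
    then show "openin (join_top X R TR S TS) U \<longleftrightarrow> openin (join_top X S TS R TR) U"
      by (simp add: openin_join_top join_rel_commute topspace_fibprod_top tR tS)
  qed
qed

text \<open>The preimage of V \<subseteq> R in R \<times>_X S is V \<times> \<Delta>: if (a, b) \<in> R and (b, d) \<in> S compose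
  into R, then (b, d) \<in> R \<inter> S is a unit.\<close>

lemma openin_join_top_if_openin_left:
  assumes eR: "etale_eqrel X R TR" and eS: "etale_eqrel X S TS" and RS: "R \<inter> S \<subseteq> diag X"
    and V: "openin TR V"
  shows "openin (join_top X R TR S TS) V"
proof -
  note R = etale_eqrelD[OF eR] and S = etale_eqrelD[OF eS]
  have "V \<subseteq> R" using openin_subset[OF V] R(1) by simp
  have diag: "b = d" if "(a, b) \<in> R" "(b, d) \<in> S" "(a, d) \<in> R" for a b d
    using that R(4,5) RS unfolding sym_def trans_def diag_def by blast
  have "{pq \<in> fibprod R S. compose_map pq \<in> V} = (V \<times> diag X) \<inter> fibprod R S"
  proof
    show "{pq \<in> fibprod R S. compose_map pq \<in> V} \<subseteq> (V \<times> diag X) \<inter> fibprod R S"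
      using \<open>V \<subseteq> R\<close> diag R(2)
      by (fastforce simp: fibprod_def compose_map_def diag_def)
    show "(V \<times> diag X) \<inter> fibprod R S \<subseteq> {pq \<in> fibprod R S. compose_map pq \<in> V}"
      by (auto simp: fibprod_def compose_map_def diag_def)
  qed
  moreover have "openin (prod_topology TR TS) (V \<times> diag X)"
    using V openin_etale_diag[OF eS] by (simp add: openin_prod_Times_iff)
  ultimately show ?thesis
    using \<open>V \<subseteq> R\<close> Un_subset_join_rel[of R S X]
    unfolding openin_join_top topspace_fibprod_top[OF R(1) S(1)]
    by (auto simp: fibprod_top_def R(1) S(1) openin_subtopology_Int)
qed

lemma openin_left_if_openin_join_top:
  assumes eR: "etale_eqrel X R TR" and eS: "etale_eqrel X S TS"
    and W: "openin (join_top X R TR S TS) W"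
  shows "openin TR (W \<inter> R)"
proof -
  note R = etale_eqrelD[OF eR] and S = etale_eqrelD[OF eS]
  have sigma: "continuous_map TR (fibprod_top TR TS) (\<lambda>p. (p, (snd p, snd p)))"
    unfolding fibprod_top_def continuous_map_in_subtopology
  proof
    show "continuous_map TR (prod_topology TR TS) (\<lambda>p. (p, snd p, snd p))"
      using continuous_map_compose[OF continuous_map_etale_snd[OF eR] continuous_map_etale_unit[OF eS]]
      by (intro continuous_map_pairedI) (auto simp: o_def)
    show "(\<lambda>p. (p, snd p, snd p)) \<in> topspace TR \<rightarrow> fibprod (topspace TR) (topspace TS)"
      using R(1,2) S(1,3) unfolding fibprod_def by auto
  qed
  have "openin (fibprod_top TR TS) {pq \<in> topspace (fibprod_top TR TS). compose_map pq \<in> W}"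
    using W openin_join_top by blast
  then have "openin TR {p \<in> topspace TR. (p, (snd p, snd p))
      \<in> {pq \<in> topspace (fibprod_top TR TS). compose_map pq \<in> W}}"
    by (rule openin_continuous_map_preimage[OF sigma])
  moreover have "{p \<in> topspace TR. (p, (snd p, snd p))
      \<in> {pq \<in> topspace (fibprod_top TR TS). compose_map pq \<in> W}} = W \<inter> R"
    using R(1,2) S(3) by (auto simp: topspace_fibprod_top[OF R(1) S(1)] fibprod_def compose_map_def)
  ultimately show ?thesis by simp
qed

lemma subtopology_join_top_left:
  assumes eR: "etale_eqrel X R TR" and eS: "etale_eqrel X S TS" and RS: "R \<inter> S \<subseteq> diag X"
  shows "subtopology (join_top X R TR S TS) R = TR"
  unfolding topology_eq openin_subtopology
proof (intro allI iffI)
  fix V assume "\<exists>W. openin (join_top X R TR S TS) W \<and> V = W \<inter> R"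
  then show "openin TR V" using openin_left_if_openin_join_top[OF eR eS] by blast
next
  fix V assume V: "openin TR V"
  then have "V = V \<inter> R" using openin_subset etale_eqrelD(1)[OF eR] by blast
  with openin_join_top_if_openin_left[OF eR eS RS V]
  show "\<exists>W. openin (join_top X R TR S TS) W \<and> V = W \<inter> R" by blast
qed

lemma subtopology_join_top_right:
  assumes eR: "etale_eqrel X R TR" and eS: "etale_eqrel X S TS" and tr: "transverse X R TR S TS"
  shows "subtopology (join_top X R TR S TS) S = TS"
proof -
  have "S \<inter> R \<subseteq> diag X" using tr unfolding transverse_def by blast
  with subtopology_join_top_left[OF eS eR]
  show ?thesis by (simp add: join_top_commute[OF tr etale_eqrelD(1)[OF eR] etale_eqrelD(1)[OF eS]])
qed

lemma groupoid_partitionD: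
  assumes "groupoid_partition X E J P"
  shows "finite P" and "\<Union>P = E" and "{} \<notin> P"
    and "\<And>U V. U \<in> P \<Longrightarrow> V \<in> P \<Longrightarrow> U \<noteq> V \<Longrightarrow> U \<inter> V = {}"
    and "\<And>U. U \<in> P \<Longrightarrow> openin J U \<and> closedin J U"
    and "\<And>U. U \<in> P \<Longrightarrow> U \<subseteq> diag X \<or> U \<subseteq> E - diag X"
    and "\<And>U. U \<in> P \<Longrightarrow> homeomorphic_map (subtopology J U) (subtopology X (fst ` U)) fst \<and>
               homeomorphic_map (subtopology J U) (subtopology X (snd ` U)) snd"
    and "\<And>U. U \<in> P \<Longrightarrow> U \<subseteq> E - diag X \<Longrightarrow> fst ` U \<inter> snd ` U = {}"
    and "\<And>U V. U \<in> P \<Longrightarrow> V \<in> P \<Longrightarrow> U O V = {} \<or> U O V \<in> P"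
    and "\<And>U. U \<in> P \<Longrightarrow> U\<inverse> \<in> P"
  using assms unfolding groupoid_partition_def by simp_all

lemma groupoid_partition_factorization:
  assumes P: "groupoid_partition X E J P" and E: "E \<subseteq> R O S" "R \<union> S \<subseteq> E"
    and R: "sym R" "trans R" and S: "sym S" "trans S" and RS: "R \<inter> S \<subseteq> Id"
    and satR: "\<And>V. V \<in> P \<Longrightarrow> V \<subseteq> R \<or> V \<inter> R = {}"
    and satS: "\<And>V. V \<in> P \<Longrightarrow> V \<subseteq> S \<or> V \<inter> S = {}"
    and U: "U \<in> P"
  shows "\<exists>!(A, B). A \<in> P \<and> B \<in> P \<and> A \<subseteq> R \<and> B \<subseteq> S \<and> U = A O B"
proof -
  note P = groupoid_partitionD[OF P]
  have same: "A = B" if "A \<in> P" "B \<in> P" "p \<in> A" "p \<in> B" for A B p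
    using P(4) that by blast
  obtain x z where xz: "(x, z) \<in> U" using U P(3) by (metis all_not_in_conv surj_pair)
  then obtain y where y: "(x, y) \<in> R" "(y, z) \<in> S" using U P(2) E(1) by blast
  then obtain A B where A: "A \<in> P" "(x, y) \<in> A" and B: "B \<in> P" "(y, z) \<in> B"
    using P(2) E(2) by blast
  have "A \<subseteq> R" "B \<subseteq> S" using A B y satR satS by blast+
  have xz_AB: "(x, z) \<in> A O B" using A B by blast
  with P(9)[OF A(1) B(1)] have "A O B \<in> P" by blast
  with same[OF U _ xz xz_AB] have "U = A O B" .
  have unique: "A' = A \<and> B' = B"
    if A': "A' \<in> P" "B' \<in> P" "A' \<subseteq> R" "B' \<subseteq> S" "U = A' O B'" for A' B'
  proof -
    obtain y' where y': "(x, y') \<in> A'" "(y', z) \<in> B'" using xz A'(5) by blast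
    then have "y' = y"
      using relcomp_middle_unique[OF R S RS] A'(3,4) y by blast
    with y' show ?thesis using same[OF A'(1) A(1)] same[OF A'(2) B(1)] A B by blast
  qed
  show ?thesis
  proof (rule ex1I[of _ "(A, B)"], goal_cases)
    case 1
    show ?case using A B \<open>A \<subseteq> R\<close> \<open>B \<subseteq> S\<close> \<open>U = A O B\<close> by simp
  next
    case (2 q)
    obtain A' B' where q: "q = (A', B')" by fastforce
    with 2 have "A' \<in> P" "B' \<in> P" "A' \<subseteq> R" "B' \<subseteq> S" "U = A' O B'" by simp_all
    with unique q show ?case by simp
  qed
qed

lemma groupoid_partition_restrict:
  assumes P: "groupoid_partition X E J P" and "Q \<subseteq> E" and Q: "sym Q" "trans Q"
    and T: "subtopology J Q = T" and sat: "\<And>U. U \<in> P \<Longrightarrow> U \<subseteq> Q \<or> U \<inter> Q = {}"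
  shows "groupoid_partition X Q T {U \<in> P. U \<subseteq> Q}"
  unfolding groupoid_partition_def
proof (intro conjI)
  note P = groupoid_partitionD[OF P]
  let ?P = "{U \<in> P. U \<subseteq> Q}"
  show "finite ?P" using P(1) by simp
  show "\<Union>?P = Q" using P(2) \<open>Q \<subseteq> E\<close> sat by blast
  show "{} \<notin> ?P" "\<forall>U \<in> ?P. \<forall>V \<in> ?P. U \<noteq> V \<longrightarrow> U \<inter> V = {}"
    using P(3,4) by blast+
  show "\<forall>U \<in> ?P. openin T U \<and> closedin T U"
    using P(5) T[symmetric] by (auto simp: openin_subtopology closedin_subtopology)
  show "\<forall>U \<in> ?P. U \<subseteq> diag X \<or> U \<subseteq> Q - diag X"
    using P(6) by blast
  have "subtopology T U = subtopology J U" if "U \<subseteq> Q" for U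
    using that T[symmetric] by (simp add: subtopology_subtopology Int_absorb1)
  then show "\<forall>U \<in> ?P. homeomorphic_map (subtopology T U) (subtopology X (fst ` U)) fst \<and>
      homeomorphic_map (subtopology T U) (subtopology X (snd ` U)) snd"
    using P(7) by simp
  show "\<forall>U \<in> ?P. U \<subseteq> Q - diag X \<longrightarrow> fst ` U \<inter> snd ` U = {}"
    using P(8) \<open>Q \<subseteq> E\<close> by blast
  show "\<forall>U \<in> ?P. \<forall>V \<in> ?P. U O V = {} \<or> U O V \<in> ?P"
    using P(9) trans_O_subset[OF Q(2)] relcomp_mono by blast
  show "\<forall>U \<in> ?P. U\<inverse> \<in> ?P"
    using P(10) Q(1) by (auto simp: sym_conv_converse_eq)
qed

lemma groupoid_partition_join_factors:
  assumes eR: "etale_eqrel X R TR" and eS: "etale_eqrel X S TS"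
    and tr: "transverse X R TR S TS"
    and P: "groupoid_partition X (join_rel X R S) (join_top X R TR S TS) P"
    and fine: "\<forall>U \<in> P. U \<subseteq> diag X \<or> U \<subseteq> R - diag X \<or> U \<subseteq> S - diag X
                          \<or> U \<subseteq> join_rel X R S - (R \<union> S)"
  shows "\<forall>U \<in> P. (\<exists>!(UR, US). UR \<in> P \<and> US \<in> P \<and> UR \<subseteq> R \<and> US \<subseteq> S \<and> U = UR O US)
             \<and> (\<exists>!(VS, VR). VS \<in> P \<and> VR \<in> P \<and> VR \<subseteq> R \<and> VS \<subseteq> S \<and> U = VS O VR)"
    and "groupoid_partition X R TR {U \<in> P. U \<subseteq> R}"
    and "groupoid_partition X S TS {U \<in> P. U \<subseteq> S}"
proof -
  note R = etale_eqrelD[OF eR] and S = etale_eqrelD[OF eS]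
  have RS: "R \<inter> S = diag X" using tr unfolding transverse_def by blast
  then have RS_Id: "R \<inter> S \<subseteq> Id" "S \<inter> R \<subseteq> Id"
    using diag_subset_Id by (simp_all add: Int_commute)
  have comm: "R O S = S O R" by (rule transverse_relcomp_commute[OF tr R(1) S(1)])
  have join: "join_rel X R S = R O S" by (rule join_rel_eq_relcomp[OF eR eS comm])
  have R_join: "R \<subseteq> join_rel X R S" and S_join: "S \<subseteq> join_rel X R S"
    using Un_subset_join_rel[of R S X] by auto
  have satR: "U \<subseteq> R \<or> U \<inter> R = {}" and satS: "U \<subseteq> S \<or> U \<inter> S = {}" if "U \<in> P" for U
    using fine[rule_format, OF that] RS by auto
  show "\<forall>U \<in> P. (\<exists>!(UR, US). UR \<in> P \<and> US \<in> P \<and> UR \<subseteq> R \<and> US \<subseteq> S \<and> U = UR O US)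
             \<and> (\<exists>!(VS, VR). VS \<in> P \<and> VR \<in> P \<and> VR \<subseteq> R \<and> VS \<subseteq> S \<and> U = VS O VR)"
  proof (intro ballI conjI)
    fix U assume U: "U \<in> P"
    show "\<exists>!(UR, US). UR \<in> P \<and> US \<in> P \<and> UR \<subseteq> R \<and> US \<subseteq> S \<and> U = UR O US"
      using groupoid_partition_factorization[OF P _ _ R(4,5) S(4,5) RS_Id(1) satR satS U]
        join R_join S_join by blast
    from groupoid_partition_factorization[OF P _ _ S(4,5) R(4,5) RS_Id(2) satS satR U]
    show "\<exists>!(VS, VR). VS \<in> P \<and> VR \<in> P \<and> VR \<subseteq> R \<and> VS \<subseteq> S \<and> U = VS O VR"
      using join comm R_join S_join by (simp add: conj_left_commute)
  qed
  show "groupoid_partition X R TR {U \<in> P. U \<subseteq> R}"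
    using groupoid_partition_restrict[OF P R_join R(4,5) subtopology_join_top_left[OF eR eS] satR]
      RS by simp
  show "groupoid_partition X S TS {U \<in> P. U \<subseteq> S}"
    by (rule groupoid_partition_restrict[OF P S_join S(4,5) subtopology_join_top_right[OF eR eS tr] satS])
qed

theorem lemma3p4:
  fixes X :: "'a topology"
    and R S :: "('a \<times> 'a) set"
    and TR TS :: "('a \<times> 'a) topology"
  assumes "compact_space X" and "metrizable_space X" and "X dim_le 0"
    and "CEER X R TR" and "CEER X S TS"
    and "transverse X R TR S TS"
  shows "(\<forall>x y. (x, y) \<in> R \<longrightarrow> card (S `` {x}) = card (S `` {y}))
    \<and> (\<forall>P. groupoid_partition X (join_rel X R S) (join_top X R TR S TS) P
          \<and> (\<forall>U \<in> P. U \<subseteq> diag X \<or> U \<subseteq> R - diag X \<or> U \<subseteq> S - diag X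
                      \<or> U \<subseteq> join_rel X R S - (R \<union> S))
        \<longrightarrow> (\<forall>U \<in> P.
               (\<exists>!(UR, US). UR \<in> P \<and> US \<in> P \<and> UR \<subseteq> R \<and> US \<subseteq> S \<and> U = UR O US)
             \<and> (\<exists>!(VS, VR). VS \<in> P \<and> VR \<in> P \<and> VR \<subseteq> R \<and> VS \<subseteq> S \<and> U = VS O VR))
          \<and> groupoid_partition X R TR {U \<in> P. U \<subseteq> R}
          \<and> groupoid_partition X S TS {U \<in> P. U \<subseteq> S})"
proof -
  have eR: "etale_eqrel X R TR" and eS: "etale_eqrel X S TS"
    using assms(4,5) unfolding CEER_def by auto
  note R = etale_eqrelD[OF eR] and S = etale_eqrelD[OF eS]
  show ?thesis
  proof (intro conjI allI impI; (elim conjE)?)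
    fix x y assume "(x, y) \<in> R"
    moreover have "R \<inter> S \<subseteq> Id"
      using assms(6) diag_subset_Id unfolding transverse_def by simp
    moreover have "R O S = S O R"
      by (rule transverse_relcomp_commute[OF assms(6) R(1) S(1)])
    ultimately show "card (S `` {x}) = card (S `` {y})"
      using card_Image_eq_if_relcomp_commute[OF R(4,5) S(4,5)] by blast
  qed (rule groupoid_partition_join_factors[OF eR eS assms(6)]; assumption)+
qed

end
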